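(* For every vertex $v$ of $G^{(\rho)}_{n,\ell}$, there are at least $n^{\Omega(\log\ell)}$ directed paths starting or ending at $v$.
   Context: The instance $G^{(\rho)}_{n,\ell}$ (with $\rho>0$ a small constant): integers $m$ and $1/\epsilon$ with $\epsilon\rho m\in\mathbb N$, $\ell=3/\epsilon$, $\epsilon m=\omega(\log m)$; ground set $[m]$. Layers $L_0,\dots,L_\ell$: $L_0=\{s\}$ with label $\emptyset$; for $1\le i<2/\epsilon$, $L_i$ has one vertex for each subset of $[m]$ of size $i\epsilon\rho m$ (its label); for $2/\epsilon\le i\le 3/\epsilon$, one vertex for each subset of size $(4-i\epsilon)\rho m$. For $u\in L_{i-1},v\in L_i$ there is an edge $(u,v)$ iff $S_u\subseteq S_v$ (if $i\le 2/\epsilon$) or $S_v\subseteq S_u$ (if $i>2/\epsilon$), where $S_w$ is the label of $w$. $n$ is the number of vertices, $n=2^{\Theta(m)}$. *)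

theory Defs
  imports Complex_Main
begin

text \<open>Parameters: m (ground set [m] = {1..m}),
  k = 1/epsilon (so l = 3k), and d = epsilon*rho*m (a natural number).\<close>

definition layer_size :: "nat \<Rightarrow> nat \<Rightarrow> nat \<Rightarrow> nat" where
  "layer_size k d i = (if i < 2 * k then i * d else (4 * k - i) * d)"

definition Gverts :: "nat \<Rightarrow> nat \<Rightarrow> nat \<Rightarrow> (nat \<times> nat set) set" where
  "Gverts m k d = {(i, S). i \<le> 3 * k \<and> S \<subseteq> {1..m} \<and> card S = layer_size k d i}"

definition Gedge :: "nat \<Rightarrow> nat \<Rightarrow> nat \<Rightarrow> (nat \<times> nat set) \<Rightarrow> (nat \<times> nat set) \<Rightarrow> bool" where
  "Gedge m k d u v \<longleftrightarrow> u \<in> Gverts m k d \<and> v \<in> Gverts m k d \<and> fst v = fst u + 1 \<and>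
     (if fst v \<le> 2 * k then snd u \<subseteq> snd v else snd v \<subseteq> snd u)"

definition Gpaths :: "nat \<Rightarrow> nat \<Rightarrow> nat \<Rightarrow> (nat \<times> nat set) list set" where
  "Gpaths m k d = {p. length p \<ge> 2 \<and> (\<forall>j. Suc j < length p \<longrightarrow> Gedge m k d (p ! j) (p ! Suc j))}"

definition paths_at :: "nat \<Rightarrow> nat \<Rightarrow> nat \<Rightarrow> (nat \<times> nat set) \<Rightarrow> (nat \<times> nat set) list set" where
  "paths_at m k d v = {p \<in> Gpaths m k d. hd p = v \<or> last p = v}"

end

theory Submission
  imports Defs
begin

(*
  From a vertex in layer i \<le> 2k walk k layers forward, from a vertex in layer i > 2k walk
  k layers backward; either way the walk stays inside the layers 0..3k.  Every step adds d
  elements to the label or removes d of them, and the pool they are chosen from always has at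
  least (k+1)d elements, so each step has at least (k+1)^d choices, as N choose d \<ge> (N/d)^d.
  Hence every vertex lies on at least (k+1)^(kd) = (k+1)^(\<rho>m) paths, while n \<le> 8^m; so the
  number of paths is at least n^(\<rho>/9 \<cdot> ln(3k)).
*)

definition walks :: "('a \<Rightarrow> 'a \<Rightarrow> bool) \<Rightarrow> nat \<Rightarrow> 'a \<Rightarrow> 'a list set" where
  "walks R t v = {p. length p = Suc t \<and> hd p = v \<and> successively R p}"

lemma walks_0: "walks R 0 v = {[v]}"
  by (auto simp: walks_def length_Suc_conv)

lemma walks_Suc: "walks R (Suc t) v = (\<Union>w\<in>{w. R v w}. (#) v ` walks R t w)"
  by (fastforce simp: walks_def length_Suc_conv successively_Cons)

lemma finite_walks:
  assumes "\<And>u. finite {w. R u w}"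
  shows "finite (walks R t v)"
  by (induction t arbitrary: v) (simp_all add: walks_0 walks_Suc assms)

lemma card_walks_ge:
  assumes fin: "\<And>u. finite {w. R u w}"
    and branching: "\<And>t u. P (Suc t) u \<Longrightarrow> B \<le> card {w. R u w}"
    and closed: "\<And>t u w. P (Suc t) u \<Longrightarrow> R u w \<Longrightarrow> P t w"
  shows "P t v \<Longrightarrow> B ^ t \<le> card (walks R t v)"
proof (induction t arbitrary: v)
  case 0
  then show ?case by (simp add: walks_0)
next
  case (Suc t)
  have "B ^ Suc t \<le> card {w. R v w} * B ^ t"
    using branching[OF Suc.prems] by simp
  also have "\<dots> = (\<Sum>w | R v w. B ^ t)"
    by simp
  also have "\<dots> \<le> (\<Sum>w | R v w. card (walks R t w))"
    using Suc.IH closed[OF Suc.prems] by (intro sum_mono) auto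
  also have "\<dots> = card (\<Union>w\<in>{w. R v w}. (#) v ` walks R t w)"
  proof (subst card_UN_disjoint)
    show "\<forall>w\<in>{w. R v w}. \<forall>w'\<in>{w. R v w}. w \<noteq> w' \<longrightarrow>
            (#) v ` walks R t w \<inter> (#) v ` walks R t w' = {}"
      by (auto simp: walks_def)
  qed (simp_all add: fin finite_walks card_image)
  finally show ?case
    by (simp add: walks_Suc)
qed

lemma power_le_binomial:
  assumes "a * k \<le> n"
  shows "a ^ k \<le> n choose k"
proof (cases "a = 0 \<or> k = 0")
  case False
  then have "real a \<le> real n / real k"
    using assms by (simp add: field_simps flip: of_nat_mult)
  then have "real a ^ k \<le> (real n / real k) ^ k"
    by (intro power_mono) auto
  also have "\<dots> \<le> real (n choose k)"
    using False assms by (intro binomial_ge_n_over_k_pow_k) (simp add: order_trans[OF _ assms])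
  finally show ?thesis
    by (simp flip: of_nat_power)
qed (cases k; auto)

lemma card_supersets_of_card:
  assumes "finite A" "S \<subseteq> A"
  shows "card {T. S \<subseteq> T \<and> T \<subseteq> A \<and> card T = card S + d} = (card A - card S) choose d"
proof -
  have fin: "finite S" "finite (A - S)"
    using assms finite_subset by auto
  have "{T. S \<subseteq> T \<and> T \<subseteq> A \<and> card T = card S + d} = (\<union>) S ` {U. U \<subseteq> A - S \<and> card U = d}"
  proof (intro equalityI subsetI)
    fix T assume T: "T \<in> {T. S \<subseteq> T \<and> T \<subseteq> A \<and> card T = card S + d}"
    then have "T = S \<union> (T - S)" "card (T - S) = d"
      using finite_subset[OF _ assms(1)] by (auto simp: card_Diff_subset)
    then show "T \<in> (\<union>) S ` {U. U \<subseteq> A - S \<and> card U = d}"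
      using T by blast
  next
    fix T assume "T \<in> (\<union>) S ` {U. U \<subseteq> A - S \<and> card U = d}"
    then obtain U where U: "U \<subseteq> A - S" "card U = d" "T = S \<union> U"
      by blast
    moreover have "finite U"
      using U(1) fin(2) finite_subset by blast
    ultimately have "card T = card S + d"
      using fin(1) by (subst U(3), subst card_Un_disjoint) auto
    then show "T \<in> {T. S \<subseteq> T \<and> T \<subseteq> A \<and> card T = card S + d}"
      using U assms(2) by auto
  qed
  moreover have "inj_on ((\<union>) S) {U. U \<subseteq> A - S \<and> card U = d}"
    by (auto simp: inj_on_def)
  ultimately show ?thesis
    using n_subsets[OF fin(2)] assms by (simp add: card_image card_Diff_subset fin)
qed

lemma card_subsets_of_card_diff:
  assumes "finite S" "d \<le> card S"
  shows "card {T. T \<subseteq> S \<and> card T = card S - d} = card S choose d"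
  using n_subsets[OF assms(1), of "card S - d"] binomial_symmetric[OF assms(2)] by simp

lemma layer_size_ascending: "i \<le> 2 * k \<Longrightarrow> layer_size k d i = i * d"
  by (auto simp: layer_size_def)

lemma layer_size_descending: "2 * k \<le> i \<Longrightarrow> layer_size k d i = (4 * k - i) * d"
  by (auto simp: layer_size_def)

lemma finite_Gverts: "finite (Gverts m k d)"
  by (rule finite_subset[of _ "{0..3 * k} \<times> Pow {1..m}"]) (auto simp: Gverts_def)

lemma Gedge_in_Gverts: "Gedge m k d u w \<Longrightarrow> u \<in> Gverts m k d \<and> w \<in> Gverts m k d"
  by (simp add: Gedge_def)

lemma finite_Gedge_successors: "finite {w. Gedge m k d u w}"
  and finite_Gedge_predecessors: "finite {w. Gedge m k d w u}"
  by (auto intro: finite_subset[OF _ finite_Gverts] dest: Gedge_in_Gverts)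

lemma Gedge_ascending:
  assumes "i < 2 * k" "S \<subseteq> T" "T \<subseteq> {1..m}" "card S = i * d" "card T = Suc i * d"
  shows "Gedge m k d (i, S) (Suc i, T)"
  using assms by (auto simp: Gedge_def Gverts_def layer_size_ascending)

lemma Gedge_descending:
  assumes "2 * k \<le> i" "i < 3 * k" "T \<subseteq> S" "S \<subseteq> {1..m}"
    "card S = (4 * k - i) * d" "card T = (4 * k - Suc i) * d"
  shows "Gedge m k d (i, S) (Suc i, T)"
  using assms by (auto simp: Gedge_def Gverts_def layer_size_descending)

lemma Gedge_out_degree:
  assumes "3 * k * d \<le> m" "(i, S) \<in> Gverts m k d" "i < 3 * k"
  shows "(k + 1) ^ d \<le> card {w. Gedge m k d (i, S) w}"
proof (cases "i < 2 * k")
  case True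
  let ?T = "{T. S \<subseteq> T \<and> T \<subseteq> {1..m} \<and> card T = card S + d}"
  have S: "S \<subseteq> {1..m}" "card S = i * d"
    using assms(2) True by (auto simp: Gverts_def layer_size_ascending)
  have "i * d + (k + 1) * d \<le> 3 * k * d"
    unfolding add_mult_distrib[symmetric] using True by (intro mult_le_mono1) simp
  then have "(k + 1) * d \<le> m - card S"
    using assms(1) S(2) by linarith
  then have "(k + 1) ^ d \<le> (m - card S) choose d"
    by (rule power_le_binomial)
  also have "\<dots> = card ?T"
    using S(1) by (simp add: card_supersets_of_card)
  also have "\<dots> \<le> card {w. Gedge m k d (i, S) w}"
    using True S by (intro card_inj_on_le[where f = "Pair (Suc i)"])
      (auto simp: inj_on_def finite_Gedge_successors intro!: Gedge_ascending)
  finally show ?thesis .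
next
  case False
  let ?T = "{T. T \<subseteq> S \<and> card T = card S - d}"
  have S: "S \<subseteq> {1..m}" "card S = (4 * k - i) * d" "finite S"
    using assms(2) False by (auto simp: Gverts_def layer_size_descending finite_subset)
  have "(k + 1) * d \<le> card S"
    unfolding S(2) using assms(3) by (intro mult_le_mono1) simp
  then have "(k + 1) ^ d \<le> card S choose d"
    by (rule power_le_binomial)
  also have "\<dots> = card ?T"
    using S(3) \<open>(k + 1) * d \<le> card S\<close> by (simp add: card_subsets_of_card_diff)
  also have "\<dots> \<le> card {w. Gedge m k d (i, S) w}"
    using False S assms(3) by (intro card_inj_on_le[where f = "Pair (Suc i)"])
      (auto simp: inj_on_def finite_Gedge_successors diff_mult_distrib intro!: Gedge_descending)
  finally show ?thesis .
qed

lemma Gedge_in_degree: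
  assumes "3 * k * d \<le> m" "(j, S) \<in> Gverts m k d" "k < j"
  shows "(k + 1) ^ d \<le> card {w. Gedge m k d w (j, S)}"
proof -
  obtain i where j: "j = Suc i"
    using assms(3) by (cases j) auto
  have v: "(Suc i, S) \<in> Gverts m k d" and "k \<le> i"
    using assms(2,3) j by auto
  show ?thesis
  proof (cases "i < 2 * k")
    case True
    let ?T = "{T. T \<subseteq> S \<and> card T = card S - d}"
    have S: "S \<subseteq> {1..m}" "card S = Suc i * d" "finite S"
      using v True by (auto simp: Gverts_def layer_size_ascending finite_subset)
    have "(k + 1) * d \<le> card S"
      unfolding S(2) using \<open>k \<le> i\<close> by (intro mult_le_mono1) simp
    then have "(k + 1) ^ d \<le> card S choose d"
      by (rule power_le_binomial)
    also have "\<dots> = card ?T"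
      using S(3) \<open>(k + 1) * d \<le> card S\<close> by (simp add: card_subsets_of_card_diff)
    also have "\<dots> \<le> card {w. Gedge m k d w (Suc i, S)}"
      using True S by (intro card_inj_on_le[where f = "Pair i"])
        (auto simp: inj_on_def finite_Gedge_predecessors intro!: Gedge_ascending)
    finally show ?thesis
      unfolding j .
  next
    case False
    let ?T = "{T. S \<subseteq> T \<and> T \<subseteq> {1..m} \<and> card T = card S + d}"
    have i: "i < 3 * k"
      using v by (simp add: Gverts_def)
    have S: "S \<subseteq> {1..m}" "card S = (4 * k - Suc i) * d"
      using v False by (auto simp: Gverts_def layer_size_descending)
    have T: "card S + d = (4 * k - i) * d"
    proof -
      have "4 * k - i = Suc (4 * k - Suc i)"
        using i by arith
      then show ?thesis
        using S(2) by simp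
    qed
    have "(4 * k - Suc i) * d + (k + 1) * d \<le> 3 * k * d"
      unfolding add_mult_distrib[symmetric] using False i by (intro mult_le_mono1) arith
    then have "(k + 1) * d \<le> m - card S"
      using assms(1) S(2) by linarith
    then have "(k + 1) ^ d \<le> (m - card S) choose d"
      by (rule power_le_binomial)
    also have "\<dots> = card ?T"
      using S(1) by (simp add: card_supersets_of_card)
    also have "\<dots> \<le> card {w. Gedge m k d w (Suc i, S)}"
      using False S i T by (intro card_inj_on_le[where f = "Pair i"])
        (auto simp: inj_on_def finite_Gedge_predecessors intro!: Gedge_descending)
    finally show ?thesis
      unfolding j .
  qed
qed

lemma Gpaths_iff: "p \<in> Gpaths m k d \<longleftrightarrow> 2 \<le> length p \<and> successively (Gedge m k d) p"
  by (simp add: Gpaths_def successively_conv_nth)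

lemma Gpath_from_vertex:
  assumes "u \<in> Gverts m k d" "successively (Gedge m k d) (u # p)"
  shows "set (u # p) \<subseteq> Gverts m k d \<and> fst u + length p \<le> 3 * k"
  using assms
proof (induction p arbitrary: u)
  case Nil
  then show ?case by (auto simp: Gverts_def)
next
  case (Cons w p)
  then have "Gedge m k d u w" "successively (Gedge m k d) (w # p)"
    by simp_all
  then have "w \<in> Gverts m k d" "fst w = Suc (fst u)"
    by (simp_all add: Gedge_def)
  with Cons.IH[of w] Cons.prems(1) \<open>successively (Gedge m k d) (w # p)\<close> show ?case
    by simp
qed

lemma Gpaths_subset_lists:
  "Gpaths m k d \<subseteq> {p. set p \<subseteq> Gverts m k d \<and> length p \<le> Suc (3 * k)}"
proof
  fix p assume "p \<in> Gpaths m k d"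
  then obtain u w q where p: "p = u # w # q" "successively (Gedge m k d) p"
    by (auto simp: Gpaths_iff numeral_2_eq_2 Suc_le_length_iff)
  then have "u \<in> Gverts m k d"
    by (simp add: Gedge_def)
  with Gpath_from_vertex[of u m k d "w # q"] p
  show "p \<in> {p. set p \<subseteq> Gverts m k d \<and> length p \<le> Suc (3 * k)}"
    by simp
qed

lemma finite_paths_at: "finite (paths_at m k d v)"
  using finite_subset[OF Gpaths_subset_lists finite_lists_length_le[OF finite_Gverts]]
  by (auto simp: paths_at_def intro: finite_subset)

lemma card_paths_at_ge:
  assumes "1 \<le> k" "3 * k * d \<le> m" "v \<in> Gverts m k d"
  shows "(k + 1) ^ (k * d) \<le> card (paths_at m k d v)"
proof -
  obtain i S where v: "v = (i, S)"
    by fastforce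
  show ?thesis
  proof (cases "i \<le> 2 * k")
    case True
    let ?P = "\<lambda>t w. w \<in> Gverts m k d \<and> fst w + t \<le> 3 * k"
    have "((k + 1) ^ d) ^ k \<le> card (walks (Gedge m k d) k v)"
    proof (rule card_walks_ge[where P = ?P])
      show "(k + 1) ^ d \<le> card {w. Gedge m k d u w}" if "?P (Suc t) u" for t u
        using that Gedge_out_degree[OF assms(2), of "fst u" "snd u"] by simp
      show "?P t w" if "?P (Suc t) u" "Gedge m k d u w" for t u w
        using that by (simp add: Gedge_def)
    qed (use assms(3) v True in \<open>auto simp: finite_Gedge_successors\<close>)
    also have "\<dots> \<le> card (paths_at m k d v)"
      by (intro card_mono finite_paths_at)
        (use assms(1) in \<open>auto simp: walks_def paths_at_def Gpaths_iff\<close>)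
    finally show ?thesis
      by (simp add: power_mult mult.commute)
  next
    case False
    let ?P = "\<lambda>t w. w \<in> Gverts m k d \<and> k + t \<le> fst w"
    let ?R = "\<lambda>w u. Gedge m k d u w"
    have "((k + 1) ^ d) ^ k \<le> card (walks ?R k v)"
    proof (rule card_walks_ge[where P = ?P])
      show "(k + 1) ^ d \<le> card {w. ?R u w}" if "?P (Suc t) u" for t u
        using that Gedge_in_degree[OF assms(2), of "fst u" "snd u"] by simp
      show "?P t w" if "?P (Suc t) u" "?R u w" for t u w
        using that by (simp add: Gedge_def)
    qed (use assms(3) v False in \<open>auto simp: finite_Gedge_predecessors\<close>)
    also have "\<dots> = card (rev ` walks ?R k v)"
      by (simp add: card_image)
    also have "\<dots> \<le> card (paths_at m k d v)"
      by (intro card_mono finite_paths_at)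
        (use assms(1) in \<open>auto simp: walks_def paths_at_def Gpaths_iff last_rev\<close>)
    finally show ?thesis
      by (simp add: power_mult mult.commute)
  qed
qed

lemma card_Gverts_le:
  assumes "k \<le> m"
  shows "card (Gverts m k d) \<le> 8 ^ m"
proof -
  have "3 * m + 1 \<le> (4::nat) ^ m"
    by (induction m) auto
  have "card (Gverts m k d) \<le> card ({0..3 * k} \<times> Pow {1..m})"
    by (rule card_mono) (auto simp: Gverts_def)
  also have "\<dots> = (3 * k + 1) * 2 ^ m"
    by (simp add: card_cartesian_product card_Pow)
  also have "\<dots> \<le> 4 ^ m * 2 ^ m"
    using \<open>3 * m + 1 \<le> 4 ^ m\<close> assms by (intro mult_le_mono1) linarith
  also have "\<dots> = 8 ^ m"
    by (simp flip: power_mult_distrib)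
  finally show ?thesis .
qed

lemma card_Gverts_powr_le_card_paths_at:
  assumes "1 \<le> k" "1 \<le> d" "3 * k * d \<le> m" "v \<in> Gverts m k d"
  shows "real (card (Gverts m k d)) powr (real (k * d) / (9 * real m) * ln (real (3 * k)))
           \<le> real (card (paths_at m k d v))"
proof -
  let ?n = "real (card (Gverts m k d))" and ?c = "real (k * d) / (9 * real m)"
  have "k \<le> m"
    using assms(2,3) le_trans[of k "3 * k * d" m] by simp
  then have m: "0 < real m"
    using assms(1) by simp
  have n: "1 \<le> ?n"
    using assms(4) finite_Gverts by (simp add: Suc_le_eq card_gt_0_iff) blast
  have "?n \<le> 8 ^ m"
    using card_Gverts_le[OF \<open>k \<le> m\<close>] by (metis of_nat_le_iff of_nat_numeral of_nat_power)
  then have "ln ?n \<le> ln (8 ^ m)"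
    using n by simp
  also have "\<dots> = 3 * ln 2 * real m"
    using ln_realpow[of 2 3] by (simp add: ln_realpow)
  also have "\<dots> \<le> 3 * real m"
    using mult_right_mono[of "ln 2" 1 "real m"] ln_2_less_1 by simp
  finally have ln_n: "ln ?n \<le> 3 * real m" .
  have "real (3 * k) \<le> real (k + 1) ^ 3"
    by (simp add: power3_eq_cube algebra_simps)
  then have "ln (real (3 * k)) \<le> ln (real (k + 1) ^ 3)"
    using assms(1) by simp
  also have "\<dots> = 3 * ln (real (k + 1))"
    by (simp add: ln_realpow)
  finally have ln_k: "ln (real (3 * k)) \<le> 3 * ln (real (k + 1))" .
  have "?n powr (?c * ln (real (3 * k))) = exp (?c * (ln (real (3 * k)) * ln ?n))"
    using n by (simp add: powr_def)
  also have "\<dots> \<le> exp (?c * (3 * ln (real (k + 1)) * (3 * real m)))"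
    using ln_k ln_n n assms(1) by (intro exp_mono mult_left_mono mult_mono) auto
  also have "\<dots> = exp (real (k * d) * ln (real (k + 1)))"
    using m by simp
  also have "\<dots> = real (k + 1) ^ (k * d)"
    by (subst powr_realpow[symmetric]) (simp_all add: powr_def)
  also have "\<dots> \<le> real (card (paths_at m k d v))"
    using card_paths_at_ge[OF assms(1,3,4)] by (metis of_nat_le_iff of_nat_power)
  finally show ?thesis .
qed

theorem lemma8:
  shows "\<exists>\<rho>0>0. \<forall>\<rho>::real. 0 < \<rho> \<and> \<rho> \<le> \<rho>0 \<longrightarrow>
    (\<exists>c>0. \<exists>C::real. \<forall>m k d::nat.
       k \<ge> 1 \<and> real d = \<rho> * real m / real k \<and> real m \<ge> C \<and> real m / real k \<ge> C * ln (real m)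
       \<longrightarrow> (\<forall>v \<in> Gverts m k d.
             real (card (paths_at m k d v)) \<ge> real (card (Gverts m k d)) powr (c * ln (real (3 * k)))))"
proof (rule exI[of _ "1 / 3"], intro conjI allI impI, goal_cases)
  case (2 \<rho>)
  then have \<rho>: "0 < \<rho>" "\<rho> \<le> 1 / 3"
    by simp_all
  show ?case
  \<comment> \<open>With C = 1 the hypotheses only force m \<ge> 1.\<close>
  proof (rule exI[of _ "\<rho> / 9"], intro conjI exI[of _ 1] allI impI ballI, goal_cases)
    case (2 m k d v)
    then have k: "1 \<le> k" and m: "1 \<le> real m" and v: "v \<in> Gverts m k d"
      and kd: "real (k * d) = \<rho> * real m"
      by (auto simp: field_simps)
    have "0 < real (k * d)"
      using kd m \<rho> by simp
    then have d: "1 \<le> d"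
      by (simp only: of_nat_0_less_iff) simp
    have "real (3 * k * d) = 3 * \<rho> * real m"
      using kd by simp
    also have "\<dots> \<le> real m"
      using \<rho> m by simp
    finally have km: "3 * k * d \<le> m"
      by (simp only: of_nat_le_iff)
    have c: "\<rho> / 9 = real (k * d) / (9 * real m)"
      using kd m by simp
    show ?case
      using card_Gverts_powr_le_card_paths_at[OF k d km v] unfolding c .
  qed (use \<rho> in simp)
qed simp

end
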